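(* Let $V$ be a unit intensity Poisson process on $\mathbb{R}^2$ and $R,\alpha>0$. The probability that $Q(0,R)=[-R,R]^2$ is not $\alpha$-sealed is at most $\lceil 8R/\alpha\rceil e^{-\pi\alpha^2/4}$.
   Context: A set $S\subset\mathbb{R}^2$ is $\alpha$-sealed w.r.t. $V$ if $d(x,V)\le\alpha$ for every $x\in\partial S$. *)

theory Defs
  imports "HOL-Probability.Probability"
begin

text \<open>Euclidean distance from a point to a set, with the convention d(x, {}) = infinity.\<close>
definition set_dist :: "real^2 \<Rightarrow> (real^2) set \<Rightarrow> ereal" where
  "set_dist x V = (INF v\<in>V. ereal (dist x v))"

definition alpha_sealed :: "real \<Rightarrow> (real^2) set \<Rightarrow> (real^2) set \<Rightarrow> bool" where
  "alpha_sealed \<alpha> S V \<longleftrightarrow> (\<forall>x\<in>frontier S. set_dist x V \<le> ereal \<alpha>)"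

definition poisson_process :: "'a measure \<Rightarrow> ('a \<Rightarrow> (real^2) set) \<Rightarrow> real \<Rightarrow> bool" where
  "poisson_process M V lam \<longleftrightarrow>
     prob_space M \<and>
     (\<forall>\<omega>\<in>space M. \<forall>B. bounded B \<longrightarrow> finite (V \<omega> \<inter> B)) \<and>
     (\<forall>B\<in>sets borel. bounded B \<longrightarrow>
        (\<lambda>\<omega>. card (V \<omega> \<inter> B)) \<in> measurable M (count_space UNIV) \<and>
        (\<forall>k::nat. measure M {\<omega>\<in>space M. card (V \<omega> \<inter> B) = k}
            = exp (- lam * measure lborel B) * (lam * measure lborel B) ^ k / fact k)) \<and>
     (\<forall>(I::nat set) (B::nat \<Rightarrow> (real^2) set).
        finite I \<and> (\<forall>i\<in>I. B i \<in> sets borel \<and> bounded (B i)) \<and> disjoint_family_on B I \<longrightarrow>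
        prob_space.indep_vars M (\<lambda>_. count_space UNIV) (\<lambda>i \<omega>. card (V \<omega> \<inter> B i)) I)"

definition Qsq :: "real \<Rightarrow> (real^2) set" where
  "Qsq R = cbox (\<chi> i. - R) (\<chi> i. R)"

end

theory Submission
  imports Defs
begin

text \<open>The boundary of Q(0,R) is a closed curve of length 8R, parametrised by arclength.
  Cutting it into N = \<lceil>8R/\<alpha>\<rceil> arcs of length at most \<alpha>, every boundary point lies within
  \<alpha>/2 of the midpoint of its arc. So if some boundary point has distance more than \<alpha> from V,
  the open disc of radius \<alpha>/2 around one of the N midpoints misses V, an event of probability
  exp(-\<pi>\<alpha>^2/4); the union bound finishes. The event itself is measurable because
  being sealed only has to be tested on a countable dense subset of the boundary, with radii
  slightly larger than \<alpha>.\<close>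

lemma set_dist_le_dist: "v \<in> W \<Longrightarrow> set_dist x W \<le> ereal (dist x v)"
  unfolding set_dist_def by (rule INF_lower)

lemma ereal_le_set_dist_iff: "ereal r \<le> set_dist x W \<longleftrightarrow> W \<inter> ball x r = {}"
proof
  assume le: "ereal r \<le> set_dist x W"
  have "r \<le> dist x v" if "v \<in> W" for v
  proof -
    have "ereal r \<le> ereal (dist x v)"
      using le set_dist_le_dist[OF that] by (rule order_trans)
    then show ?thesis by simp
  qed
  then show "W \<inter> ball x r = {}" by (auto simp: not_less[symmetric])
next
  assume "W \<inter> ball x r = {}"
  then show "ereal r \<le> set_dist x W"
    unfolding set_dist_def by (intro INF_greatest) (auto simp: not_less)
qed

lemma ereal_less_set_dist_iff: "ereal r < set_dist x W \<longleftrightarrow> (\<exists>s>r. W \<inter> ball x s = {})"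
proof
  assume "ereal r < set_dist x W"
  then obtain s where "ereal r < ereal s" "ereal s < set_dist x W"
    using ereal_dense2 by blast
  then show "\<exists>s>r. W \<inter> ball x s = {}"
    by (auto simp: ereal_le_set_dist_iff[symmetric] intro!: exI[of _ s])
next
  assume "\<exists>s>r. W \<inter> ball x s = {}"
  then obtain s where "r < s" "W \<inter> ball x s = {}" by blast
  then have "ereal r < ereal s" "ereal s \<le> set_dist x W"
    by (simp_all add: ereal_le_set_dist_iff)
  then show "ereal r < set_dist x W" by (rule order_less_le_trans)
qed

lemma not_alpha_sealed_iff_dense:
  assumes "D \<subseteq> frontier S" "frontier S \<subseteq> closure D"
  shows "\<not> alpha_sealed \<alpha> S W \<longleftrightarrow> (\<exists>q\<in>D. \<exists>n::nat. W \<inter> ball q (\<alpha> + 1 / Suc n) = {})"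
proof
  assume "\<not> alpha_sealed \<alpha> S W"
  then obtain x s where x: "x \<in> frontier S" "\<alpha> < s" "W \<inter> ball x s = {}"
    unfolding alpha_sealed_def by (auto simp: not_le ereal_less_set_dist_iff)
  obtain n :: nat where n: "1 / Suc n < (s - \<alpha>) / 2"
    using reals_Archimedean[of "(s - \<alpha>) / 2"] x(2) by (auto simp: inverse_eq_divide)
  obtain q where q: "q \<in> D" "dist q x < 1 / Suc n"
    using x(1) assms(2) closure_approachable[of x D] by (meson of_nat_0_less_iff subsetD
        zero_less_Suc divide_pos_pos zero_less_one)
  have "ball q (\<alpha> + 1 / Suc n) \<subseteq> ball x s"
  proof
    fix y assume "y \<in> ball q (\<alpha> + 1 / Suc n)"
    then show "y \<in> ball x s"
      using n q(2) dist_triangle[of x y q] by (simp add: dist_commute)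
  qed
  then show "\<exists>q\<in>D. \<exists>n::nat. W \<inter> ball q (\<alpha> + 1 / Suc n) = {}"
    using x(3) q(1) by blast
next
  assume "\<exists>q\<in>D. \<exists>n::nat. W \<inter> ball q (\<alpha> + 1 / Suc n) = {}"
  then obtain q and n :: nat where "q \<in> frontier S" "W \<inter> ball q (\<alpha> + 1 / Suc n) = {}"
    using assms(1) by blast
  moreover from this(2) have "ereal \<alpha> < set_dist q W"
    unfolding ereal_less_set_dist_iff by (intro exI[of _ "\<alpha> + 1 / Suc n"]) simp
  ultimately show "\<not> alpha_sealed \<alpha> S W"
    unfolding alpha_sealed_def by (auto simp: not_le)
qed

lemma not_alpha_sealed_imp_void_ball:
  assumes cover: "frontier S \<subseteq> (\<Union>i\<in>I. cball (c i) (\<alpha>/2))" and "\<not> alpha_sealed \<alpha> S W"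
  shows "\<exists>i\<in>I. W \<inter> ball (c i) (\<alpha>/2) = {}"
proof -
  obtain x where x: "x \<in> frontier S" "ereal \<alpha> < set_dist x W"
    using assms(2) unfolding alpha_sealed_def by (auto simp: not_le)
  then have void: "W \<inter> ball x \<alpha> = {}"
    using ereal_le_set_dist_iff less_imp_le by blast
  obtain i where i: "i \<in> I" "dist (c i) x \<le> \<alpha>/2"
    using cover x(1) by auto
  have "ball (c i) (\<alpha>/2) \<subseteq> ball x \<alpha>"
  proof
    fix y assume "y \<in> ball (c i) (\<alpha>/2)"
    then show "y \<in> ball x \<alpha>"
      using i(2) dist_triangle[of x y "c i"] by (simp add: dist_commute)
  qed
  then show ?thesis using void i(1) by blast
qed

lemma lipschitz_path_cover:
  fixes g :: "real \<Rightarrow> 'a::metric_space"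
  assumes g: "1-lipschitz_on {0..L} g" and "L > 0" "\<alpha> > 0"
  defines "N \<equiv> nat \<lceil>L / \<alpha>\<rceil>"
  shows "g ` {0..L} \<subseteq> (\<Union>i<N. cball (g ((real i + 1/2) * (L / N))) (\<alpha>/2))"
proof
  fix x assume "x \<in> g ` {0..L}"
  then obtain t where t: "t \<in> {0..L}" "x = g t" by blast
  define h where "h = L / N"
  have N: "N \<ge> 1" "L / \<alpha> \<le> N"
    using assms(2,3) unfolding N_def by (simp_all add: Suc_le_eq)
  have h: "0 < h" "h \<le> \<alpha>"
    using N assms(2,3) by (simp_all add: h_def field_simps)
  define i where "i = min (N - 1) (nat \<lfloor>t / h\<rfloor>)"
  have "i < N" using N unfolding i_def by linarith
  have "t / h \<le> N" using t h(1) N(1) by (simp add: h_def field_simps)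
  have floor_t: "real (nat \<lfloor>t / h\<rfloor>) \<le> t / h" "t / h < real (nat \<lfloor>t / h\<rfloor>) + 1"
    using t h(1) by (simp_all add: divide_nonneg_pos)
  have "real i \<le> t / h"
    using floor_t(1) unfolding i_def by (meson min.cobounded2 of_nat_le_iff order_trans)
  moreover have "t / h \<le> real i + 1"
  proof (cases "N - 1 \<le> nat \<lfloor>t / h\<rfloor>")
    case True
    then show ?thesis using \<open>t / h \<le> N\<close> N(1) by (simp add: i_def of_nat_diff)
  next
    case False
    then show ?thesis using floor_t(2) by (simp add: i_def)
  qed
  ultimately have near: "\<bar>t - (real i + 1/2) * h\<bar> \<le> h / 2"
    using h(1) by (simp add: field_simps abs_le_iff)
  have centre: "(real i + 1/2) * h \<in> {0..L}"
  proof -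
    have "0 \<le> (real i + 1/2) * h" using h(1) by simp
    moreover have "(real i + 1/2) * h \<le> N * h"
      using \<open>i < N\<close> h(1) by (intro mult_right_mono) linarith+
    moreover have "N * h = L" using N(1) by (simp add: h_def)
    ultimately show ?thesis by simp
  qed
  have "dist (g ((real i + 1/2) * h)) x \<le> dist ((real i + 1/2) * h) t"
    using lipschitz_onD[OF g centre t(1)] t(2) by simp
  also have "\<dots> \<le> \<alpha>/2"
    using near h(2) by (simp add: dist_real_def abs_minus_commute)
  finally have "dist (g ((real i + 1/2) * h)) x \<le> \<alpha>/2" .
  then show "x \<in> (\<Union>i<N. cball (g ((real i + 1/2) * (L / N))) (\<alpha>/2))"
    using \<open>i < N\<close> unfolding h_def by auto
qed

definition square_path :: "real \<Rightarrow> real \<Rightarrow> real^2" where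
  "square_path R t =
     (if t \<le> 2*R then vector [t - R, -R]
      else if t \<le> 4*R then vector [R, t - 3*R]
      else if t \<le> 6*R then vector [5*R - t, R]
      else vector [-R, 7*R - t])"

lemma lipschitz_on_square_path: "1-lipschitz_on {0..8*R} (square_path R)"
proof (rule lipschitz_onI)
  fix s t assume st: "s \<in> {0..8*R}" "t \<in> {0..8*R}"
  have "dist (square_path R s) (square_path R t)
      \<le> (\<Sum>i\<in>UNIV. \<bar>(square_path R s - square_path R t) $ i\<bar>)"
    unfolding dist_norm by (rule norm_le_l1_cart)
  also have "\<dots> \<le> dist s t"
    using st by (auto simp: sum_2 square_path_def dist_real_def)
  finally show "dist (square_path R s) (square_path R t) \<le> 1 * dist s t" by simp
qed simp

lemma frontier_Qsq_subset_square_path: "frontier (Qsq R) \<subseteq> square_path R ` {0..8*R}"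
proof
  fix x assume "x \<in> frontier (Qsq R)"
  then have box: "-R \<le> x$1" "x$1 \<le> R" "-R \<le> x$2" "x$2 \<le> R"
    and side: "x$2 = -R \<or> x$1 = R \<or> x$2 = R \<or> x$1 = -R"
    unfolding Qsq_def frontier_cbox by (auto simp: mem_box_cart forall_2)
  from side obtain t where "t \<in> {0..8*R}" "square_path R t = x"
  proof (elim disjE)
    assume "x$2 = -R" then show ?thesis
      using box by (intro that[of "x$1 + R"]) (auto simp: square_path_def vec_eq_iff forall_2)
  next
    assume "x$1 = R" then show ?thesis
      using box by (intro that[of "x$2 + 3*R"]) (auto simp: square_path_def vec_eq_iff forall_2)
  next
    assume "x$2 = R" then show ?thesis
      using box by (intro that[of "5*R - x$1"]) (auto simp: square_path_def vec_eq_iff forall_2)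
  next
    assume "x$1 = -R" then show ?thesis
      using box by (intro that[of "7*R - x$2"]) (auto simp: square_path_def vec_eq_iff forall_2)
  qed
  then show "x \<in> square_path R ` {0..8*R}" by blast
qed

lemma poisson_process_void_event:
  assumes V: "poisson_process M V lam" and B: "B \<in> sets borel" "bounded B"
  shows "{\<omega>\<in>space M. V \<omega> \<inter> B = {}} \<in> sets M"
    and "measure M {\<omega>\<in>space M. V \<omega> \<inter> B = {}} = exp (- lam * measure lborel B)"
proof -
  have card_meas: "(\<lambda>\<omega>. card (V \<omega> \<inter> B)) \<in> measurable M (count_space UNIV)"
    and card_law: "measure M {\<omega>\<in>space M. card (V \<omega> \<inter> B) = 0} = exp (- lam * measure lborel B)"
    using V B unfolding poisson_process_def by auto
  have "{\<omega>\<in>space M. V \<omega> \<inter> B = {}} = (\<lambda>\<omega>. card (V \<omega> \<inter> B)) -` {0} \<inter> space M"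
    using V B(2) unfolding poisson_process_def by auto
  moreover have "(\<lambda>\<omega>. card (V \<omega> \<inter> B)) -` {0} \<inter> space M \<in> sets M"
    using card_meas by (rule measurable_sets) simp
  moreover have "(\<lambda>\<omega>. card (V \<omega> \<inter> B)) -` {0} \<inter> space M = {\<omega>\<in>space M. card (V \<omega> \<inter> B) = 0}"
    by blast
  ultimately show "{\<omega>\<in>space M. V \<omega> \<inter> B = {}} \<in> sets M"
    and "measure M {\<omega>\<in>space M. V \<omega> \<inter> B = {}} = exp (- lam * measure lborel B)"
    using card_law by simp_all
qed

lemma poisson_process_not_alpha_sealed_sets:
  assumes "poisson_process M V lam"
  shows "{\<omega>\<in>space M. \<not> alpha_sealed \<alpha> S (V \<omega>)} \<in> sets M"
proof -
  obtain D where D: "countable D" "D \<subseteq> frontier S" "frontier S \<subseteq> closure D"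
    using separable by blast
  have "{\<omega>\<in>space M. \<not> alpha_sealed \<alpha> S (V \<omega>)}
      = (\<Union>q\<in>D. \<Union>n. {\<omega>\<in>space M. V \<omega> \<inter> ball q (\<alpha> + 1 / Suc n) = {}})"
    using not_alpha_sealed_iff_dense[OF D(2,3)] by auto
  also have "\<dots> \<in> sets M"
    using D(1) poisson_process_void_event(1)[OF assms] by (intro sets.countable_UN'' sets.countable_UN) auto
  finally show ?thesis .
qed

theorem lemma10:
  fixes M :: "'a measure" and V :: "'a \<Rightarrow> (real^2) set" and R \<alpha> :: real
  assumes "poisson_process M V 1" and "R > 0" and "\<alpha> > 0"
  shows "{\<omega>\<in>space M. \<not> alpha_sealed \<alpha> (Qsq R) (V \<omega>)} \<in> sets M \<and>
         measure M {\<omega>\<in>space M. \<not> alpha_sealed \<alpha> (Qsq R) (V \<omega>)}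
           \<le> of_int \<lceil>8 * R / \<alpha>\<rceil> * exp (- pi * \<alpha>^2 / 4)"
proof -
  interpret prob_space M using assms(1) unfolding poisson_process_def by blast
  define N where "N = nat \<lceil>8 * R / \<alpha>\<rceil>"
  define c where "c i = square_path R ((real i + 1/2) * (8 * R / N))" for i
  define E where "E = {\<omega>\<in>space M. \<not> alpha_sealed \<alpha> (Qsq R) (V \<omega>)}"
  define A where "A i = {\<omega>\<in>space M. V \<omega> \<inter> ball (c i) (\<alpha>/2) = {}}" for i
  have "square_path R ` {0..8*R} \<subseteq> (\<Union>i<N. cball (c i) (\<alpha>/2))"
    unfolding N_def c_def using assms(2,3) by (intro lipschitz_path_cover lipschitz_on_square_path) auto
  with frontier_Qsq_subset_square_path
  have cover: "frontier (Qsq R) \<subseteq> (\<Union>i<N. cball (c i) (\<alpha>/2))" by (rule order_trans)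
  have "E \<subseteq> (\<Union>i<N. A i)"
  proof
    fix \<omega> assume "\<omega> \<in> E"
    then have "\<omega> \<in> space M" "\<exists>i\<in>{..<N}. V \<omega> \<inter> ball (c i) (\<alpha>/2) = {}"
      unfolding E_def using not_alpha_sealed_imp_void_ball[OF cover] by auto
    then show "\<omega> \<in> (\<Union>i<N. A i)" unfolding A_def by auto
  qed
  have A: "A i \<in> sets M" "measure M (A i) = exp (- pi * \<alpha>^2 / 4)" for i
    using poisson_process_void_event[OF assms(1), of "ball (c i) (\<alpha>/2)"] circle_area[of "\<alpha>/2"]
      assms(3) unfolding A_def by (simp_all add: power_divide)
  have "measure M E \<le> measure M (\<Union>i<N. A i)"
    using \<open>E \<subseteq> (\<Union>i<N. A i)\<close> A(1) by (intro finite_measure_mono) auto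
  also have "\<dots> \<le> (\<Sum>i<N. measure M (A i))"
    using A(1) by (intro measure_UNION_le) auto
  also have "\<dots> = of_int \<lceil>8 * R / \<alpha>\<rceil> * exp (- pi * \<alpha>^2 / 4)"
    using assms(2,3) by (simp add: A(2) N_def)
  finally show ?thesis
    using poisson_process_not_alpha_sealed_sets[OF assms(1)] unfolding E_def by simp
qed

end
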